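(* Let $G$ be a graph with an even number of edges. Suppose there is a positive integer $t$ such that $G$ contains at least $t$ pairwise vertex-disjoint induced copies of $F$ and $G$ contains no clique with more than $t$ vertices. Then $G$ is even-decomposable.
   Context: $F$ denotes the disjoint union of two vertex-disjoint copies of $K_{5,5}$. A graph $H$ is even-decomposable if there is a sequence $V(H)=V_0\supset V_1\supset\cdots\supset V_k=\emptyset$ such that for each $0\le i\le k-1$, $H[V_i]$ has an even number of edges and $V_i\setminus V_{i+1}$ is an independent set in $H$. *)

theory Defs
  imports Main
begin

definition graph :: "'a set \<Rightarrow> 'a set set \<Rightarrow> bool" where
  "graph V E \<longleftrightarrow> finite V \<and> (\<forall>e\<in>E. e \<subseteq> V \<and> card e = 2)"

definition induced_edges :: "'a set set \<Rightarrow> 'a set \<Rightarrow> 'a set set" where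
  "induced_edges E S = {e \<in> E. e \<subseteq> S}"

definition independent :: "'a set set \<Rightarrow> 'a set \<Rightarrow> bool" where
  "independent E S \<longleftrightarrow> (\<forall>x\<in>S. \<forall>y\<in>S. {x, y} \<notin> E)"

definition clique :: "'a set set \<Rightarrow> 'a set \<Rightarrow> bool" where
  "clique E K \<longleftrightarrow> (\<forall>x\<in>K. \<forall>y\<in>K. x \<noteq> y \<longrightarrow> {x, y} \<in> E)"

text \<open>The graph F = two disjoint copies of K_{5,5}, on vertex set {0..<20}:
  the first copy has parts {0..4}, {5..9}, the second has parts {10..14}, {15..19}.\<close>
definition F_verts :: "nat set" where
  "F_verts = {0..<20}"

definition F_edges :: "nat set set" where
  "F_edges = {{i, j} | i j. (i < 5 \<and> 5 \<le> j \<and> j < 10) \<or> (10 \<le> i \<and> i < 15 \<and> 15 \<le> j \<and> j < 20)}"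

definition induced_copy_F :: "'a set \<Rightarrow> 'a set set \<Rightarrow> (nat \<Rightarrow> 'a) \<Rightarrow> bool" where
  "induced_copy_F V E f \<longleftrightarrow> inj_on f F_verts \<and> f ` F_verts \<subseteq> V \<and>
     (\<forall>i\<in>F_verts. \<forall>j\<in>F_verts. ({f i, f j} \<in> E \<longleftrightarrow> {i, j} \<in> F_edges))"

definition even_decomposable :: "'a set \<Rightarrow> 'a set set \<Rightarrow> bool" where
  "even_decomposable V E \<longleftrightarrow> (\<exists>(W :: nat \<Rightarrow> 'a set) k.
     W 0 = V \<and> W k = {} \<and>
     (\<forall>i<k. W (Suc i) \<subset> W i \<and> even (card (induced_edges E (W i))) \<and>
            independent E (W i - W (Suc i))))"

end

theory Submission
  imports Defs "HOL-Library.Disjoint_Sets"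
begin

text \<open>Peel off, one independent set at a time, vertices whose removal keeps the number of
  edges even: a vertex of even degree, or two non-adjacent vertices of odd degree. Greedy peeling
  inside a set Y only gets stuck once what is left of Y is a clique. An induced copy of F is
  triangle-free and contains three disjoint induced matchings of size two; a parity case analysis
  shows that each such matching lets us peel one more vertex of a clique Q together with part of
  the matching, so a copy of F turns a clique Q into a clique of size at most
  max 2 (card Q - 1). Starting from a clique of size at most t, the t disjoint copies shrink it
  to at most two vertices, which, having an even number of edges, form an independent set.\<close>

definition edge_count :: "'a set set \<Rightarrow> 'a set \<Rightarrow> nat" where
  "edge_count E S = card (induced_edges E S)"

definition deg :: "'a set set \<Rightarrow> 'a set \<Rightarrow> 'a \<Rightarrow> nat" where
  "deg E S v = card {u \<in> S. {u, v} \<in> E}"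

text \<open>One step of an even decomposition. The parity condition is imposed on the smaller set,
  so that it is preserved along peels and the initial set is the only one to check.\<close>
definition peel :: "'a set set \<Rightarrow> 'a set \<Rightarrow> 'a set \<Rightarrow> bool" where
  "peel E S T \<longleftrightarrow> T \<subset> S \<and> independent E (S - T) \<and> even (edge_count E T)"

abbreviation peels :: "'a set set \<Rightarrow> 'a set \<Rightarrow> 'a set \<Rightarrow> bool" where
  "peels E \<equiv> (peel E)\<^sup>*\<^sup>*"

lemma peels_even_edge_count: "peels E S T \<Longrightarrow> even (edge_count E S) \<Longrightarrow> even (edge_count E T)"
  by (induction rule: rtranclp_induct) (auto simp: peel_def)

lemma peels_subset: "peels E S T \<Longrightarrow> T \<subseteq> S"
  by (induction rule: rtranclp_induct) (auto simp: peel_def)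

lemma peels_imp_decomposition:
  assumes "peels E S T" "even (edge_count E S)"
  shows "\<exists>(W :: nat \<Rightarrow> 'a set) k. W 0 = S \<and> W k = T \<and>
    (\<forall>i<k. W (Suc i) \<subset> W i \<and> even (card (induced_edges E (W i))) \<and> independent E (W i - W (Suc i)))"
  using assms
proof (induction rule: converse_rtranclp_induct)
  case base
  show ?case by (intro exI[of _ "\<lambda>_. T"] exI[of _ 0]) auto
next
  case (step S S')
  then obtain W k where W: "W 0 = S'" "W k = T"
    "\<forall>i<k. W (Suc i) \<subset> W i \<and> even (card (induced_edges E (W i))) \<and> independent E (W i - W (Suc i))"
    by (auto simp: peel_def)
  define W' where "W' i = (case i of 0 \<Rightarrow> S | Suc j \<Rightarrow> W j)" for i
  have "W' (Suc i) \<subset> W' i \<and> even (card (induced_edges E (W' i))) \<and> independent E (W' i - W' (Suc i))"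
    if "i < Suc k" for i
    using that step W by (cases i) (auto simp: W'_def peel_def edge_count_def)
  then show ?case using W by (intro exI[of _ W'] exI[of _ "Suc k"]) (auto simp: W'_def)
qed

lemma deg_remove_nonadjacent: "{c, x} \<notin> E \<Longrightarrow> deg E (S - {c}) x = deg E S x"
  unfolding deg_def by (rule arg_cong[where f = card]) auto

lemma deg_remove_adjacent:
  assumes "finite S" "c \<in> S" "{c, x} \<in> E"
  shows "Suc (deg E (S - {c}) x) = deg E S x"
proof -
  have "{u \<in> S - {c}. {u, x} \<in> E} = {u \<in> S. {u, x} \<in> E} - {c}" by auto
  moreover have "c \<in> {u \<in> S. {u, x} \<in> E}" using assms by simp
  ultimately show ?thesis using assms(1) card_Suc_Diff1[of "{u \<in> S. {u, x} \<in> E}" c]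
    unfolding deg_def by simp
qed

lemma deg_parity_remove:
  "finite S \<Longrightarrow> c \<in> S \<Longrightarrow> even (deg E (S - {c}) x) \<longleftrightarrow> (even (deg E S x) \<longleftrightarrow> {c, x} \<notin> E)"
  using deg_remove_adjacent[of S c x E] deg_remove_nonadjacent[of c x E S]
  by (cases "{c, x} \<in> E") (auto, presburger+)

lemma clique_subset: "clique E K \<Longrightarrow> K' \<subseteq> K \<Longrightarrow> clique E K'"
  unfolding clique_def by blast

definition induced_2K2 :: "'a set set \<Rightarrow> 'a set \<Rightarrow> bool" where
  "induced_2K2 E G \<longleftrightarrow> (\<exists>a b a' b'. G = {a, b, a', b'} \<and> distinct [a, b, a', b'] \<and>
     {a, b} \<in> E \<and> {a', b'} \<in> E \<and> {a, a'} \<notin> E \<and> {a, b'} \<notin> E \<and> {b, a'} \<notin> E \<and> {b, b'} \<notin> E)"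

lemma induced_2K2_partner:
  assumes "induced_2K2 E G" "c \<in> G"
  shows "\<exists>c'\<in>G. c' \<noteq> c \<and> {c, c'} \<in> E"
proof -
  obtain a b a' b' where G: "G = {a, b, a', b'}" "distinct [a, b, a', b']" "{a, b} \<in> E" "{a', b'} \<in> E"
    using assms(1) unfolding induced_2K2_def by blast
  then have "{b, a} \<in> E" "{b', a'} \<in> E" by (simp_all add: insert_commute)
  with G assms(2) show ?thesis by auto
qed

text \<open>A vertex set that can absorb one vertex of any disjoint clique (lemma peels_absorb_clique);
  every induced copy of F is one.\<close>
definition absorber :: "'a set set \<Rightarrow> 'a set \<Rightarrow> bool" where
  "absorber E C \<longleftrightarrow> (\<forall>K\<subseteq>C. clique E K \<longrightarrow> card K \<le> 2) \<and>
     (\<exists>G :: nat \<Rightarrow> 'a set. (\<forall>r<3. induced_2K2 E (G r) \<and> G r \<subseteq> C) \<and> disjoint_family_on G {..<3})"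

definition F_adjacent :: "nat \<Rightarrow> nat \<Rightarrow> bool" where
  "F_adjacent i j \<longleftrightarrow> (i < 5 \<and> 5 \<le> j \<and> j < 10) \<or> (j < 5 \<and> 5 \<le> i \<and> i < 10) \<or>
     (10 \<le> i \<and> i < 15 \<and> 15 \<le> j \<and> j < 20) \<or> (10 \<le> j \<and> j < 15 \<and> 15 \<le> i \<and> i < 20)"

lemma F_edges_iff: "{i, j} \<in> F_edges \<longleftrightarrow> F_adjacent i j"
proof
  assume "{i, j} \<in> F_edges"
  then obtain a b where "{i, j} = {a, b}"
    "(a < 5 \<and> 5 \<le> b \<and> b < 10) \<or> (10 \<le> a \<and> a < 15 \<and> 15 \<le> b \<and> b < 20)"
    unfolding F_edges_def by blast
  then show "F_adjacent i j" unfolding F_adjacent_def by (auto simp: doubleton_eq_iff)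
next
  assume "F_adjacent i j"
  then consider "(i < 5 \<and> 5 \<le> j \<and> j < 10) \<or> (10 \<le> i \<and> i < 15 \<and> 15 \<le> j \<and> j < 20)"
    | "(j < 5 \<and> 5 \<le> i \<and> i < 10) \<or> (10 \<le> j \<and> j < 15 \<and> 15 \<le> i \<and> i < 20)"
    unfolding F_adjacent_def by blast
  then show "{i, j} \<in> F_edges"
  proof cases
    case 1
    then show ?thesis unfolding F_edges_def by blast
  next
    case 2
    then have "\<exists>a b. {i, j} = {a, b} \<and> ((a < 5 \<and> 5 \<le> b \<and> b < 10) \<or> (10 \<le> a \<and> a < 15 \<and> 15 \<le> b \<and> b < 20))"
      by (intro exI[of _ j] exI[of _ i]) (simp add: insert_commute)
    then show ?thesis unfolding F_edges_def by blast
  qed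
qed

lemma F_adjacent_triangle_free: "F_adjacent i j \<Longrightarrow> F_adjacent i k \<Longrightarrow> F_adjacent j k \<Longrightarrow> False"
  unfolding F_adjacent_def by (elim disjE conjE; linarith)

lemma induced_copy_F_edge_iff:
  "induced_copy_F V E f \<Longrightarrow> i < 20 \<Longrightarrow> j < 20 \<Longrightarrow> {f i, f j} \<in> E \<longleftrightarrow> F_adjacent i j"
  unfolding induced_copy_F_def F_verts_def by (simp add: F_edges_iff)

lemma induced_copy_F_triangle_free:
  assumes f: "induced_copy_F V E f" and K: "K \<subseteq> f ` F_verts" "clique E K"
  shows "card K \<le> 2"
proof (rule ccontr)
  assume "\<not> card K \<le> 2"
  then obtain T where "T \<subseteq> K" "card T = 3" using obtain_subset_with_card_n[of 3 K] by auto
  then obtain x y z where xyz: "x \<in> K" "y \<in> K" "z \<in> K" "x \<noteq> y" "x \<noteq> z" "y \<noteq> z"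
    by (auto simp: card_3_iff)
  moreover have "\<exists>i<20. w = f i" if "w \<in> K" for w
    using subsetD[OF K(1) that] unfolding F_verts_def by auto
  ultimately obtain i j k where ijk: "i < 20" "j < 20" "k < 20" "x = f i" "y = f j" "z = f k"
    by meson
  have "{f i, f j} \<in> E" "{f i, f k} \<in> E" "{f j, f k} \<in> E"
    using K(2) xyz ijk(4-6) unfolding clique_def by blast+
  then have "F_adjacent i j" "F_adjacent i k" "F_adjacent j k"
    using induced_copy_F_edge_iff[OF f] ijk(1-3) by blast+
  then show False by (rule F_adjacent_triangle_free)
qed

lemma induced_copy_F_absorber:
  assumes f: "induced_copy_F V E f"
  shows "absorber E (f ` F_verts)"
proof -
  have inj: "f i = f j \<longleftrightarrow> i = j" if "i < 20" "j < 20" for i j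
    using f that unfolding induced_copy_F_def F_verts_def by (auto dest: inj_onD)
  define G where "G r = {f r, f (5 + r), f (10 + r), f (15 + r)}" for r
  have "induced_2K2 E (G r)" if "r < 3" for r
  proof -
    have "F_adjacent r (5 + r)" "F_adjacent (10 + r) (15 + r)" "\<not> F_adjacent r (10 + r)"
      "\<not> F_adjacent r (15 + r)" "\<not> F_adjacent (5 + r) (10 + r)" "\<not> F_adjacent (5 + r) (15 + r)"
      using that unfolding F_adjacent_def by auto
    then show ?thesis unfolding induced_2K2_def G_def using that inj
      by (intro exI[of _ "f r"] exI[of _ "f (5 + r)"] exI[of _ "f (10 + r)"] exI[of _ "f (15 + r)"])
        (simp add: induced_copy_F_edge_iff[OF f])
  qed
  moreover have "G r \<subseteq> f ` F_verts" if "r < 3" for r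
    using that unfolding G_def F_verts_def by auto
  moreover have "disjoint_family_on G {..<3}"
    unfolding disjoint_family_on_def G_def by (auto simp: inj)
  ultimately show ?thesis
    unfolding absorber_def using induced_copy_F_triangle_free[OF f] by blast
qed

locale simple_graph =
  fixes V :: "'a set" and E :: "'a set set"
  assumes graph: "graph V E"
begin

lemma finite_subset_V: "S \<subseteq> V \<Longrightarrow> finite S"
  using graph finite_subset unfolding graph_def by blast

lemma finite_E: "finite E"
  using graph unfolding graph_def by (meson Pow_iff finite_Pow_iff finite_subset subsetI)

lemma card_edge: "e \<in> E \<Longrightarrow> card e = 2"
  using graph unfolding graph_def by auto

lemma no_loop: "{x} \<notin> E"
  using card_edge by fastforce

lemma singleton_independent: "independent E {x}"
  using no_loop unfolding independent_def by auto

lemma edge_count_remove: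
  assumes "v \<in> S"
  shows "edge_count E S = edge_count E (S - {v}) + deg E S v"
proof -
  let ?Ev = "{e \<in> E. e \<subseteq> S \<and> v \<in> e}"
  have split: "induced_edges E S = induced_edges E (S - {v}) \<union> ?Ev"
    and disj: "induced_edges E (S - {v}) \<inter> ?Ev = {}"
    unfolding induced_edges_def by auto
  have "bij_betw (\<lambda>u. {u, v}) {u \<in> S. {u, v} \<in> E} ?Ev"
  proof (rule bij_betwI')
    fix e assume e: "e \<in> ?Ev"
    then obtain x y where "e = {x, y}" "x \<noteq> y" using card_edge[of e] by (auto simp: card_2_iff)
    with e show "\<exists>u\<in>{u \<in> S. {u, v} \<in> E}. e = {u, v}" by (auto simp: insert_commute)
  qed (use assms in \<open>auto simp: doubleton_eq_iff\<close>)
  then have "card ?Ev = deg E S v" unfolding deg_def by (simp add: bij_betw_same_card)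
  moreover have "finite (induced_edges E (S - {v}))" "finite ?Ev"
    using finite_E unfolding induced_edges_def by auto
  ultimately show ?thesis unfolding edge_count_def split by (simp add: card_Un_disjoint[OF _ _ disj])
qed

lemma peel_even_vertex:
  assumes "even (edge_count E S)" "v \<in> S" "even (deg E S v)"
  shows "peel E S (S - {v})"
proof -
  have "S - (S - {v}) = {v}" using assms(2) by auto
  then show ?thesis
    using assms edge_count_remove[of v S] singleton_independent unfolding peel_def by auto
qed

lemma peel_odd_pair:
  assumes "even (edge_count E S)" "u \<in> S" "v \<in> S" "u \<noteq> v" "{u, v} \<notin> E"
    and "odd (deg E S u)" "odd (deg E S v)"
  shows "peel E S (S - {u, v})"
proof -
  have "deg E (S - {u}) v = deg E S v" using assms(5) by (rule deg_remove_nonadjacent)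
  then have "edge_count E S = edge_count E (S - {u} - {v}) + deg E S u + deg E S v"
    using edge_count_remove[of u S] edge_count_remove[of v "S - {u}"] assms(2-4) by simp
  moreover have "S - {u} - {v} = S - {u, v}" "S - (S - {u, v}) = {u, v}" using assms(2,3) by auto
  moreover have "independent E {u, v}"
    using assms(5) no_loop unfolding independent_def by (auto simp: insert_commute)
  ultimately show ?thesis using assms(1,2,6,7) unfolding peel_def by auto
qed

text \<open>Peel x and q, where q has odd degree and x has even degree exactly when it is adjacent to q:
  either both are odd and non-adjacent, or x is peeled first, which makes the degree of q even.\<close>
lemma peels_pair:
  assumes S: "S \<subseteq> V" "even (edge_count E S)" and in_S: "x \<in> S" "q \<in> S" "x \<noteq> q"
    and q: "odd (deg E S q)" and x: "even (deg E S x) \<longleftrightarrow> {x, q} \<in> E"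
  shows "peels E S (S - {x, q})"
proof (cases "{x, q} \<in> E")
  case True
  have step1: "peel E S (S - {x})" using peel_even_vertex[OF S(2) in_S(1)] x True by simp
  then have "even (edge_count E (S - {x}))" unfolding peel_def by blast
  moreover have "even (deg E (S - {x}) q)"
    using deg_parity_remove[OF finite_subset_V[OF S(1)] in_S(1)] q True by simp
  ultimately have "peel E (S - {x}) (S - {x} - {q})"
    using peel_even_vertex[of "S - {x}" q] in_S by blast
  moreover have "S - {x} - {q} = S - {x, q}" by auto
  ultimately show ?thesis using step1 by (metis converse_rtranclp_into_rtranclp r_into_rtranclp)
next
  case False
  then show ?thesis using peel_odd_pair[OF S(2) in_S] q x by blast
qed

lemma peel_in_nonclique:
  assumes "even (edge_count E S)" "Y \<subseteq> S" "\<not> clique E Y"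
  shows "\<exists>R. R \<noteq> {} \<and> R \<subseteq> Y \<and> peel E S (S - R)"
proof (cases "\<exists>y\<in>Y. even (deg E S y)")
  case True
  then obtain y where "y \<in> Y" "even (deg E S y)" by auto
  then have "peel E S (S - {y})" using peel_even_vertex[OF assms(1)] assms(2) by blast
  then show ?thesis using \<open>y \<in> Y\<close> by (intro exI[of _ "{y}"]) auto
next
  case False
  obtain u v where "u \<in> Y" "v \<in> Y" "u \<noteq> v" "{u, v} \<notin> E"
    using assms(3) unfolding clique_def by auto
  moreover have "odd (deg E S u)" "odd (deg E S v)" using False \<open>u \<in> Y\<close> \<open>v \<in> Y\<close> by auto
  ultimately have "peel E S (S - {u, v})" using peel_odd_pair[OF assms(1)] assms(2) by blast
  then show ?thesis using \<open>u \<in> Y\<close> \<open>v \<in> Y\<close> by (intro exI[of _ "{u, v}"]) auto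
qed

lemma peels_to_clique:
  assumes "S \<subseteq> V" "Y \<subseteq> S" "even (edge_count E S)"
  shows "\<exists>K \<subseteq> Y. clique E K \<and> peels E S (K \<union> (S - Y))"
  using assms
proof (induction "card Y" arbitrary: S Y rule: less_induct)
  case less
  show ?case
  proof (cases "clique E Y")
    case True
    moreover have "Y \<union> (S - Y) = S" using less.prems by auto
    ultimately show ?thesis by auto
  next
    case False
    then obtain R where R: "R \<noteq> {}" "R \<subseteq> Y" "peel E S (S - R)"
      using peel_in_nonclique[OF less.prems(3,2)] by blast
    have "finite Y" using finite_subset_V less.prems(1,2) by blast
    moreover have "Y - R \<subset> Y" using R(1,2) by blast
    ultimately have smaller: "card (Y - R) < card Y" by (rule psubset_card_mono)
    have "S - R \<subseteq> V" "Y - R \<subseteq> S - R" "even (edge_count E (S - R))"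
      using less.prems R(3) unfolding peel_def by auto
    from less.hyps[OF smaller this] obtain K where K: "K \<subseteq> Y - R" "clique E K"
        "peels E (S - R) (K \<union> (S - R - (Y - R)))"
      by blast
    have "S - R - (Y - R) = S - Y" using R(2) by auto
    then have "peels E S (K \<union> (S - Y))" using converse_rtranclp_into_rtranclp[OF R(3) K(3)] by simp
    then show ?thesis using K(1,2) by blast
  qed
qed

lemma peels_even_then_pair:
  assumes S: "S \<subseteq> V" "even (edge_count E S)" and in_S: "c \<in> S" "c' \<in> S" "q \<in> S"
    and distinct: "c \<noteq> c'" "c \<noteq> q" "c' \<noteq> q"
    and edges: "{c, c'} \<in> E" "{c, q} \<notin> E"
    and parity: "even (deg E S c)" "odd (deg E S q)" "even (deg E S c') \<longleftrightarrow> {c', q} \<notin> E"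
  shows "peels E S (S - {c, c', q})"
proof -
  have step: "peel E S (S - {c})" using peel_even_vertex[OF S(2) in_S(1) parity(1)] .
  have fin: "finite S" using finite_subset_V[OF S(1)] .
  have q: "odd (deg E (S - {c}) q)"
    using deg_parity_remove[OF fin in_S(1), where x = q] edges(2) parity(2) by simp
  have c': "even (deg E (S - {c}) c') \<longleftrightarrow> {c', q} \<in> E"
    using deg_parity_remove[OF fin in_S(1), where x = c'] edges(1) parity(3) by simp
  have S': "S - {c} \<subseteq> V" "even (edge_count E (S - {c}))" using step S(1) unfolding peel_def by auto
  have "peels E (S - {c}) (S - {c} - {c', q})"
    by (rule peels_pair[OF S']) (use in_S distinct q c' in auto)
  moreover have "S - {c} - {c', q} = S - {c, c', q}" by auto
  ultimately show ?thesis using step by (metis converse_rtranclp_into_rtranclp)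
qed

lemma peels_odd_pair_then_pair:
  assumes S: "S \<subseteq> V" "even (edge_count E S)" and in_S: "a \<in> S" "a' \<in> S" "b \<in> S" "q \<in> S"
    and distinct: "a \<noteq> a'" "a \<noteq> b" "a' \<noteq> b" "a \<noteq> q" "a' \<noteq> q" "b \<noteq> q"
    and edges: "{a, a'} \<notin> E" "{a, b} \<in> E" "{a', b} \<notin> E" "{a, q} \<in> E" "{a', q} \<in> E" "{b, q} \<in> E"
    and parity: "odd (deg E S a)" "odd (deg E S a')" "odd (deg E S b)" "odd (deg E S q)"
  shows "peels E S (S - {a, a', b, q})"
proof -
  have step: "peel E S (S - {a, a'})" using peel_odd_pair[OF S(2) in_S(1,2)] distinct edges parity by blast
  have fin: "finite S" "finite (S - {a})" using finite_subset_V[OF S(1)] by auto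
  have "even (deg E (S - {a}) b)" "even (deg E (S - {a}) q)"
    using deg_parity_remove[OF fin(1) in_S(1), where x = b]
      deg_parity_remove[OF fin(1) in_S(1), where x = q] edges(2,4) parity(3,4) by simp_all
  moreover have a': "a' \<in> S - {a}" using in_S distinct by simp
  ultimately have "even (deg E (S - {a} - {a'}) b)" "odd (deg E (S - {a} - {a'}) q)"
    using deg_parity_remove[OF fin(2) a', where x = b] deg_parity_remove[OF fin(2) a', where x = q]
      edges(3,5) by simp_all
  moreover have "S - {a} - {a'} = S - {a, a'}" by auto
  ultimately have b: "even (deg E (S - {a, a'}) b)" and q: "odd (deg E (S - {a, a'}) q)" by simp_all
  have S': "S - {a, a'} \<subseteq> V" "even (edge_count E (S - {a, a'}))"
    using step S(1) unfolding peel_def by auto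
  have "peels E (S - {a, a'}) (S - {a, a'} - {b, q})"
    by (rule peels_pair[OF S']) (use in_S distinct edges b q in auto)
  moreover have "S - {a, a'} - {b, q} = S - {a, a', b, q}" by auto
  ultimately show ?thesis using step by (metis converse_rtranclp_into_rtranclp)
qed

lemma peels_odd_vertex_via_2K2:
  assumes S: "S \<subseteq> V" "even (edge_count E S)" and q: "q \<in> S" "odd (deg E S q)"
    and G: "induced_2K2 E G" "G \<subseteq> S" "q \<notin> G"
    and G_parity: "\<And>x. x \<in> G \<Longrightarrow> even (deg E S x) \<longleftrightarrow> {x, q} \<notin> E"
  shows "\<exists>R\<subseteq>G. peels E S (S - insert q R)"
proof -
  obtain a b a' b' where G_def: "G = {a, b, a', b'}" and distinct: "distinct [a, b, a', b']"
    and edges: "{a, b} \<in> E" "{a, a'} \<notin> E" "{b, a'} \<notin> E"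
    using G(1) unfolding induced_2K2_def by blast
  have in_S: "a \<in> S" "b \<in> S" "a' \<in> S" and ne_q: "a \<noteq> q" "b \<noteq> q" "a' \<noteq> q"
    using G(2,3) G_def by auto
  show ?thesis
  proof (cases "\<exists>x\<in>G. even (deg E S x)")
    case True
    then obtain c where c: "c \<in> G" "even (deg E S c)" by blast
    obtain c' where c': "c' \<in> G" "c' \<noteq> c" "{c, c'} \<in> E"
      using induced_2K2_partner[OF G(1) c(1)] by blast
    have "{c, q} \<notin> E" "even (deg E S c') \<longleftrightarrow> {c', q} \<notin> E"
      using G_parity c c'(1) by auto
    moreover have "c \<in> S" "c' \<in> S" "c \<noteq> q" "c' \<noteq> q" using G(2,3) c(1) c'(1) by auto
    ultimately have "peels E S (S - {c, c', q})"
      by (intro peels_even_then_pair[OF S]) (use c c' q in auto)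
    moreover have "S - {c, c', q} = S - insert q {c, c'}" by blast
    ultimately show ?thesis using c(1) c'(1) by (intro exI[of _ "{c, c'}"]) auto
  next
    case False
    have G_mem: "a \<in> G" "a' \<in> G" "b \<in> G" using G_def by simp_all
    then have odd: "odd (deg E S a)" "odd (deg E S a')" "odd (deg E S b)" using False by blast+
    have "{a, q} \<in> E" "{a', q} \<in> E" "{b, q} \<in> E"
      using G_parity[OF G_mem(1)] G_parity[OF G_mem(2)] G_parity[OF G_mem(3)] odd by simp_all
    moreover have "{a', b} \<notin> E" using edges(3) by (simp add: insert_commute)
    moreover have "a \<noteq> a'" "a \<noteq> b" "a' \<noteq> b" using distinct by auto
    ultimately have "peels E S (S - {a, a', b, q})"
      using peels_odd_pair_then_pair[OF S in_S(1,3,2) q(1) _ _ _ ne_q(1,3,2) edges(2,1)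
          _ _ _ _ odd q(2)] by blast
    moreover have "S - {a, a', b, q} = S - insert q {a, a', b}" by blast
    ultimately show ?thesis using G_mem by (intro exI[of _ "{a, a', b}"]) auto
  qed
qed

lemma peels_clique_vertex_via_2K2:
  assumes S: "S \<subseteq> V" "even (edge_count E S)" and Q: "Q \<subseteq> S" "clique E Q" "q0 \<in> Q"
    and G: "induced_2K2 E G" "G \<subseteq> S" "G \<inter> Q = {}"
  shows "\<exists>q\<in>Q. \<exists>R\<subseteq>G. peels E S (S - insert q R)"
proof (cases "\<exists>q\<in>Q. even (deg E S q)")
  case True
  then obtain q where "q \<in> Q" "even (deg E S q)" by blast
  then have "peel E S (S - insert q {})" using peel_even_vertex[OF S(2)] Q(1) by auto
  then show ?thesis using \<open>q \<in> Q\<close> by blast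
next
  case False
  then have Q_odd: "odd (deg E S q)" if "q \<in> Q" for q using that by blast
  show ?thesis
  proof (cases "\<exists>q\<in>Q. \<exists>x\<in>G. even (deg E S x) \<longleftrightarrow> {x, q} \<in> E")
    case True
    then obtain q x where "q \<in> Q" "x \<in> G" "even (deg E S x) \<longleftrightarrow> {x, q} \<in> E" by blast
    then have "peels E S (S - {x, q})" using peels_pair[OF S] Q(1) G(2,3) Q_odd by blast
    moreover have "S - {x, q} = S - insert q {x}" by blast
    ultimately show ?thesis using \<open>q \<in> Q\<close> \<open>x \<in> G\<close> by (intro bexI[of _ q] exI[of _ "{x}"]) auto
  next
    case False
    then have "even (deg E S x) \<longleftrightarrow> {x, q0} \<notin> E" if "x \<in> G" for x
      using that Q(3) by blast
    moreover have "q0 \<in> S" "odd (deg E S q0)" "q0 \<notin> G" using Q(1,3) Q_odd G(3) by auto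
    ultimately show ?thesis using peels_odd_vertex_via_2K2[OF S _ _ G(1,2)] Q(3) by blast
  qed
qed

lemma peels_clique_via_2K2s:
  assumes S: "S \<subseteq> V" "even (edge_count E S)" and Q: "Q \<subseteq> S" "clique E Q"
    and G: "\<forall>r<k. induced_2K2 E (G r) \<and> G r \<subseteq> S \<and> G r \<inter> Q = {}" "disjoint_family_on G {..<k}"
  shows "\<exists>S'. peels E S S' \<and> S - S' \<subseteq> Q \<union> (\<Union>r<k. G r) \<and> card (S' \<inter> Q) \<le> card Q - k"
  using G
proof (induction k)
  case 0
  have "card (S \<inter> Q) \<le> card Q" using finite_subset_V Q(1) S(1) by (meson card_mono inf_le2 order_trans)
  then show ?case by (intro exI[of _ S]) auto
next
  case (Suc k)
  have "\<forall>r<k. induced_2K2 E (G r) \<and> G r \<subseteq> S \<and> G r \<inter> Q = {}" using Suc.prems(1) by simp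
  moreover have "disjoint_family_on G {..<k}" by (rule disjoint_family_on_mono[OF _ Suc.prems(2)]) auto
  ultimately obtain S1 where S1: "peels E S S1" "S - S1 \<subseteq> Q \<union> (\<Union>r<k. G r)" "card (S1 \<inter> Q) \<le> card Q - k"
    using Suc.IH by blast
  show ?case
  proof (cases "S1 \<inter> Q = {}")
    case True
    then show ?thesis using S1 by (intro exI[of _ S1]) auto
  next
    case False
    then obtain q0 where q0: "q0 \<in> S1 \<inter> Q" by blast
    have S1_sub: "S1 \<subseteq> S" using peels_subset[OF S1(1)] .
    have Gk: "induced_2K2 E (G k)" "G k \<subseteq> S" "G k \<inter> Q = {}" using Suc.prems(1) by auto
    have "G k \<inter> G r = {}" if "r < k" for r
      using disjoint_family_onD[OF Suc.prems(2)] that by simp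
    then have "G k \<inter> (\<Union>r<k. G r) = {}" by blast
    then have Gk_S1: "G k \<subseteq> S1" using Gk(2,3) S1(2) by blast
    have S1_props: "S1 \<subseteq> V" "even (edge_count E S1)" "S1 \<inter> Q \<subseteq> S1" "clique E (S1 \<inter> Q)"
      using S1_sub S peels_even_edge_count[OF S1(1) S(2)] Q(2) unfolding clique_def by auto
    obtain q R where qR: "q \<in> S1 \<inter> Q" "R \<subseteq> G k" "peels E S1 (S1 - insert q R)"
      using peels_clique_vertex_via_2K2[OF S1_props q0 Gk(1) Gk_S1] Gk(3) by blast
    have "(S1 - insert q R) \<inter> Q = (S1 \<inter> Q) - {q}" using qR(2) Gk(3) by auto
    moreover have "finite (S1 \<inter> Q)" using finite_subset_V Q(1) S(1) by blast
    ultimately have "card ((S1 - insert q R) \<inter> Q) \<le> card Q - Suc k"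
      using S1(3) qR(1) by (simp add: card_Diff_singleton)
    moreover have "S - (S1 - insert q R) \<subseteq> Q \<union> (\<Union>r<Suc k. G r)"
      using S1(2) qR(1,2) by (auto simp: lessThan_Suc)
    ultimately show ?thesis using rtranclp_trans[OF S1(1) qR(3)] by (intro exI[of _ "S1 - insert q R"]) simp
  qed
qed

lemma peels_absorb_clique:
  assumes S: "S \<subseteq> V" "even (edge_count E S)" and C: "absorber E C" "C \<subseteq> S"
    and Q: "Q \<subseteq> S" "clique E Q" "Q \<inter> C = {}"
  shows "\<exists>K\<subseteq>Q \<union> C. clique E K \<and> card K \<le> max 2 (card Q - 1) \<and> peels E S (K \<union> (S - (Q \<union> C)))"
proof -
  have triangle_free: "\<forall>K\<subseteq>C. clique E K \<longrightarrow> card K \<le> 2"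
    using C(1) unfolding absorber_def by (rule conjunct1)
  obtain G :: "nat \<Rightarrow> 'a set" where G: "\<forall>r<3. induced_2K2 E (G r) \<and> G r \<subseteq> C" "disjoint_family_on G {..<3}"
    using conjunct2[OF C(1)[unfolded absorber_def]] by blast
  have "\<forall>r<3. induced_2K2 E (G r) \<and> G r \<subseteq> S \<and> G r \<inter> Q = {}" using G(1) C(2) Q(3) by blast
  from peels_clique_via_2K2s[OF S Q(1,2) this G(2)] obtain S1 where
    S1: "peels E S S1" "S - S1 \<subseteq> Q \<union> (\<Union>r<3. G r)" "card (S1 \<inter> Q) \<le> card Q - 3"
    by blast
  have "S1 \<subseteq> S" using peels_subset[OF S1(1)] .
  then have "S1 \<subseteq> V" "S1 \<inter> (Q \<union> C) \<subseteq> S1" "even (edge_count E S1)"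
    using S peels_even_edge_count[OF S1(1)] by auto
  from peels_to_clique[OF this] obtain K where
    K: "K \<subseteq> S1 \<inter> (Q \<union> C)" "clique E K" "peels E S1 (K \<union> (S1 - S1 \<inter> (Q \<union> C)))"
    by blast
  have "S1 - S1 \<inter> (Q \<union> C) = S - (Q \<union> C)" using \<open>S1 \<subseteq> S\<close> S1(2) G(1) by auto
  then have "peels E S (K \<union> (S - (Q \<union> C)))" using rtranclp_trans[OF S1(1) K(3)] by simp
  have fin: "finite Q" "finite C" using finite_subset_V Q(1) C(2) S(1) by blast+
  have "K = (K \<inter> Q) \<union> (K \<inter> C)" using K(1) by blast
  then have "card K \<le> card (K \<inter> Q) + card (K \<inter> C)" by (metis card_Un_le)
  moreover have "card (K \<inter> Q) \<le> card (S1 \<inter> Q)"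
    using K(1) fin(1) by (intro card_mono) auto
  moreover have "card (K \<inter> C) \<le> 2"
    using triangle_free K(2) clique_subset[of E K "K \<inter> C"] by blast
  ultimately have "card K \<le> max 2 (card Q - 1)" using S1(3) by linarith
  then show ?thesis using K(1,2) \<open>peels E S (K \<union> (S - (Q \<union> C)))\<close> by blast
qed

lemma peels_to_small_clique:
  assumes "\<forall>j<m. absorber E (C j) \<and> C j \<subseteq> Y" "disjoint_family_on C {..<m}"
    and "S \<subseteq> V" "Y \<subseteq> S" "even (edge_count E S)"
    and "\<forall>K\<subseteq>Y. clique E K \<longrightarrow> card K \<le> t"
  shows "\<exists>K\<subseteq>Y. clique E K \<and> card K \<le> max 2 (t - m) \<and> peels E S (K \<union> (S - Y))"
  using assms
proof (induction m arbitrary: S Y)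
  case 0
  from peels_to_clique[OF "0.prems"(3-5)] obtain K where K: "K \<subseteq> Y" "clique E K" "peels E S (K \<union> (S - Y))"
    by blast
  moreover have "card K \<le> t" using "0.prems"(6) K(1,2) by blast
  ultimately show ?case by (intro exI[of _ K]) auto
next
  case (Suc m)
  let ?Y = "Y - C m"
  have blocks: "\<forall>j<m. absorber E (C j) \<and> C j \<subseteq> ?Y"
  proof (intro allI impI)
    fix j assume "j < m"
    then have "absorber E (C j) \<and> C j \<subseteq> Y" "C j \<inter> C m = {}"
      using Suc.prems(1) disjoint_family_onD[OF Suc.prems(2)] by simp_all
    then show "absorber E (C j) \<and> C j \<subseteq> ?Y" by blast
  qed
  have disjoint: "disjoint_family_on C {..<m}"
    by (rule disjoint_family_on_mono[OF _ Suc.prems(2)]) auto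
  have Y: "?Y \<subseteq> S" "\<forall>K\<subseteq>?Y. clique E K \<longrightarrow> card K \<le> t" using Suc.prems(4,6) by auto
  from Suc.IH[OF blocks disjoint Suc.prems(3) Y(1) Suc.prems(5) Y(2)] obtain Q where
    Q: "Q \<subseteq> ?Y" "clique E Q" "card Q \<le> max 2 (t - m)" "peels E S (Q \<union> (S - ?Y))"
    by blast
  define S1 where "S1 = Q \<union> (S - ?Y)"
  have Cm: "absorber E (C m)" "C m \<subseteq> Y" using Suc.prems(1) by auto
  have "S1 \<subseteq> V" "even (edge_count E S1)" "C m \<subseteq> S1" "Q \<subseteq> S1" "Q \<inter> C m = {}"
    using Q Cm Suc.prems(3-5) peels_even_edge_count[OF Q(4)] unfolding S1_def by auto
  from peels_absorb_clique[OF this(1,2) Cm(1) this(3,4) Q(2) this(5)] obtain K where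
    K: "K \<subseteq> Q \<union> C m" "clique E K" "card K \<le> max 2 (card Q - 1)" "peels E S1 (K \<union> (S1 - (Q \<union> C m)))"
    by blast
  have "S1 - (Q \<union> C m) = S - Y" using Q(1) Cm(2) unfolding S1_def by auto
  then have "peels E S (K \<union> (S - Y))" using rtranclp_trans[OF Q(4)[folded S1_def] K(4)] by simp
  moreover have "card K \<le> max 2 (t - Suc m)" using K(3) Q(3) by linarith
  moreover have "K \<subseteq> Y" using K(1) Q(1) Cm(2) by blast
  ultimately show ?case using K(2) by blast
qed

lemma independent_if_even_clique_le2:
  assumes "K \<subseteq> V" "clique E K" "card K \<le> 2" "even (edge_count E K)"
  shows "independent E K"
  unfolding independent_def
proof (intro ballI)
  fix u v assume uv: "u \<in> K" "v \<in> K"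
  show "{u, v} \<notin> E"
  proof (cases "u = v")
    case True
    then show ?thesis using no_loop by simp
  next
    case False
    have K: "K = {u, v}"
      using card_seteq[OF finite_subset_V[OF assms(1)], of "{u, v}"] uv assms(3) False by simp
    show ?thesis
    proof
      assume uv_edge: "{u, v} \<in> E"
      have "e = {u, v}" if "e \<in> E" "e \<subseteq> {u, v}" for e
        using card_seteq[of "{u, v}" e] that card_edge[of e] False by simp
      then have "induced_edges E K = {{u, v}}" using uv_edge K unfolding induced_edges_def by blast
      then show False using assms(4) unfolding edge_count_def by simp
    qed
  qed
qed

lemma peels_independent_to_empty:
  assumes "independent E K"
  shows "peels E K {}"
proof (cases "K = {}")
  case False
  have "induced_edges E {} = {}" using card_edge unfolding induced_edges_def by fastforce
  then have "peel E K {}" using False assms unfolding peel_def edge_count_def by auto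
  then show ?thesis by blast
qed simp

end

theorem mainTheorem9:
  fixes V :: "'a set" and E :: "'a set set" and t :: nat
  assumes "graph V E"
    and "even (card E)"
    and "t > 0"
    and "\<exists>copies :: nat \<Rightarrow> nat \<Rightarrow> 'a.
           (\<forall>i<t. induced_copy_F V E (copies i)) \<and>
           (\<forall>i<t. \<forall>j<t. i \<noteq> j \<longrightarrow> copies i ` F_verts \<inter> copies j ` F_verts = {})"
    and "\<forall>K. K \<subseteq> V \<and> clique E K \<longrightarrow> card K \<le> t"
  shows "even_decomposable V E"
proof -
  interpret simple_graph V E by (rule simple_graph.intro) (rule assms(1))
  obtain copies :: "nat \<Rightarrow> nat \<Rightarrow> 'a" where copies: "\<forall>i<t. induced_copy_F V E (copies i)"
    and disjoint: "disjoint_family_on (\<lambda>i. copies i ` F_verts) {..<t}"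
    using assms(4) unfolding disjoint_family_on_def by auto
  have "induced_edges E V = E" using assms(1) unfolding graph_def induced_edges_def by auto
  then have even_V: "even (edge_count E V)" using assms(2) unfolding edge_count_def by simp
  have absorbers: "\<forall>i<t. absorber E (copies i ` F_verts) \<and> copies i ` F_verts \<subseteq> V"
  proof (intro allI impI)
    fix i assume "i < t"
    then have "induced_copy_F V E (copies i)" using copies by blast
    then show "absorber E (copies i ` F_verts) \<and> copies i ` F_verts \<subseteq> V"
      using induced_copy_F_absorber unfolding induced_copy_F_def by blast
  qed
  have "\<forall>K\<subseteq>V. clique E K \<longrightarrow> card K \<le> t" using assms(5) by blast
  from peels_to_small_clique[OF absorbers disjoint subset_refl subset_refl even_V this]
  obtain K where K: "K \<subseteq> V" "clique E K" "card K \<le> 2" "peels E V K"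
    by auto
  have "independent E K"
    using independent_if_even_clique_le2[OF K(1-3)] peels_even_edge_count[OF K(4) even_V] by blast
  then have "peels E V {}" using rtranclp_trans[OF K(4) peels_independent_to_empty] by blast
  then show ?thesis
    using peels_imp_decomposition[OF _ even_V] unfolding even_decomposable_def edge_count_def by blast
qed

end
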